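(* Let $G^S$ be a tree on the state node set $V^S$, and let the network $\mathcal G=G^S\cup G^I$ have $m\ge 2$ external input nodes $u_1,\dots,u_m$, attached to pairwise distinct state nodes $v_1,\dots,v_m$. Then $\mathcal G$ is strongly structurally controllable if and only if $V^S$ can be partitioned into $m$ disjoint sets $V_1^S,\dots,V_m^S$ such that, for each $r$, the subgraph of $G^S$ induced by $V_r^S$ is a path, $v_r\in V_r^S$, and $v_r$ is an endpoint of that path (i.e. each component $\mathcal G_r$, consisting of the path on $V_r^S$ with the single input $u_r$, is an SSC path network with its input at a terminal node); in such a decomposition any two distinct parts are joined by at most one edge of $G^S$.
   Context: Network model: a network $\mathcal G=G^S\cup G^I$ consists of an undirected simple state graph $G^S$ on state nodes $\{1,\dots,n\}$ and a set of $m$ external input nodes $u_1,\dots,u_m$, where each input node $u_r$ has exactly one directed edge, to a state node $v_r$, and the $v_r$ are pairwise distinct; the input matrix is $B=[e_{v_1},\dots,e_{v_m}]\in\mathbb R^{n\times m}$. The dynamics are $\dot x=Mx+Bu$, where $M$ ranges over the family $Q(G^S)$ of symmetric matrices with $M_{ij}=a_{ij}>0$ if $\{i,j\}$ is an edge of $G^S$, $M_{ij}=0$ if $i\ne j$ are non-adjacent, and $M_{ii}=-\sum_{j\in\mathcal N_i}a_{ij}+a_{ii}$ with an arbitrary self-loop weight $a_{ii}<0$ ($\mathcal N_i$ the neighbours of $i$ in $G^S$). The network is strongly structurally controllable (SSC) if for every $M\in Q(G^S)$ the controllability matrix $[B,MB,\dots,M^{n-1}B]$ has rank $n$. A path consisting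 of a single vertex has that vertex as its endpoint. *)

theory Defs
  imports "HOL-Analysis.Analysis"
begin

text \<open>State graph: vertex set UNIV of a finite type 'n (the state nodes 1..n),
  edges given by a symmetric irreflexive relation E.\<close>

definition simple_graph :: "('n \<Rightarrow> 'n \<Rightarrow> bool) \<Rightarrow> bool" where
  "simple_graph E \<longleftrightarrow> (\<forall>x y. E x y \<longrightarrow> E y x) \<and> (\<forall>x. \<not> E x x)"

definition is_gpath :: "('n \<Rightarrow> 'n \<Rightarrow> bool) \<Rightarrow> 'n list \<Rightarrow> bool" where
  "is_gpath E xs \<longleftrightarrow> xs \<noteq> [] \<and> distinct xs \<and> (\<forall>i. Suc i < length xs \<longrightarrow> E (xs ! i) (xs ! Suc i))"

definition graph_connected :: "('n \<Rightarrow> 'n \<Rightarrow> bool) \<Rightarrow> bool" where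
  "graph_connected E \<longleftrightarrow> (\<forall>u v. \<exists>xs. is_gpath E xs \<and> hd xs = u \<and> last xs = v)"

definition graph_acyclic :: "('n \<Rightarrow> 'n \<Rightarrow> bool) \<Rightarrow> bool" where
  "graph_acyclic E \<longleftrightarrow> \<not> (\<exists>xs. is_gpath E xs \<and> length xs \<ge> 3 \<and> E (last xs) (hd xs))"

definition is_tree :: "('n \<Rightarrow> 'n \<Rightarrow> bool) \<Rightarrow> bool" where
  "is_tree E \<longleftrightarrow> simple_graph E \<and> graph_connected E \<and> graph_acyclic E"

definition induced_path_from :: "('n \<Rightarrow> 'n \<Rightarrow> bool) \<Rightarrow> 'n set \<Rightarrow> 'n \<Rightarrow> bool" where
  "induced_path_from E S v \<longleftrightarrow>
     (\<exists>xs. is_gpath E xs \<and> set xs = S \<and> hd xs = v \<and>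
        (\<forall>i j. i < length xs \<and> j < length xs \<and> E (xs ! i) (xs ! j) \<longrightarrow> i = Suc j \<or> j = Suc i))"

fun matpow :: "real^'n^'n \<Rightarrow> nat \<Rightarrow> real^'n^'n" where
  "matpow M 0 = mat 1"
| "matpow M (Suc k) = M ** matpow M k"

definition qualclass :: "('n::finite \<Rightarrow> 'n \<Rightarrow> bool) \<Rightarrow> (real^'n^'n) set" where
  "qualclass E = {M. transpose M = M \<and>
      (\<forall>i j. i \<noteq> j \<longrightarrow> (E i j \<longrightarrow> M $ i $ j > 0) \<and> (\<not> E i j \<longrightarrow> M $ i $ j = 0)) \<and>
      (\<forall>i. \<exists>a::real. a < 0 \<and> M $ i $ i = - (\<Sum>j\<in>{j. E i j}. M $ i $ j) + a)}"

text \<open>Columns of the controllability matrix [B, MB, ..., M^(n-1) B] with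
  B = [e_{v 0}, ..., e_{v (m-1)}]; its rank is the dimension of the span of its columns.\<close>
definition ctrb_columns :: "real^'n^'n \<Rightarrow> nat \<Rightarrow> (nat \<Rightarrow> 'n::finite) \<Rightarrow> (real^'n) set" where
  "ctrb_columns M m v = (\<Union>k<CARD('n). {matpow M k *v axis (v r) 1 | r. r < m})"

definition SSC :: "('n::finite \<Rightarrow> 'n \<Rightarrow> bool) \<Rightarrow> nat \<Rightarrow> (nat \<Rightarrow> 'n) \<Rightarrow> bool" where
  "SSC E m v \<longleftrightarrow> (\<forall>M\<in>qualclass E. dim (ctrb_columns M m v) = CARD('n))"

definition path_decomposition :: "('n \<Rightarrow> 'n \<Rightarrow> bool) \<Rightarrow> nat \<Rightarrow> (nat \<Rightarrow> 'n) \<Rightarrow> (nat \<Rightarrow> 'n set) \<Rightarrow> bool" where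
  "path_decomposition E m v V \<longleftrightarrow>
     (\<Union>r<m. V r) = UNIV \<and>
     (\<forall>r<m. \<forall>r'<m. r \<noteq> r' \<longrightarrow> V r \<inter> V r' = {}) \<and>
     (\<forall>r<m. v r \<in> V r \<and> induced_path_from E (V r) (v r))"

end

theory Submission
  imports Defs
begin

text \<open>For symmetric \<open>M\<close>, a vector \<open>x\<close> is orthogonal to all columns \<open>M\<^sup>t e\<^sub>v\<^sub>r\<close> iff the
  trajectory \<open>M\<^sup>t x\<close> vanishes at every input node. The support of such a trajectory is a fort
  (no vertex outside it has exactly one neighbour in it), so the network is SSC once every fort
  contains an input node. Conversely, on a forest every fort \<open>F\<close> supports an eigenvector of some
  admissible \<open>M\<close>: sign the vertices of \<open>F\<close> so that each outside vertex with neighbours in \<open>F\<close> sees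
  both signs, and balance the edge weights. So for trees, SSC means that every fort meets the inputs.

  Growing disjoint paths from the inputs as long as some path end has a unique uncovered neighbour,
  the uncovered remainder is a fort, hence empty, which yields the path decomposition. Conversely, if
  a fort avoided the inputs of a path decomposition, the last vertex of a path before it enters the
  fort has a second neighbour in the fort, on another path; chasing these edges gives arbitrarily
  long non-backtracking walks, impossible in a finite forest. Two edges between two parts would
  close a cycle.\<close>

lemma matpow_commute: "matpow M k ** M = M ** matpow M k"
  by (induction k) (simp_all, metis matrix_mul_assoc)

lemma transpose_matpow: "transpose M = M \<Longrightarrow> transpose (matpow M k) = matpow M k"
  by (induction k) (auto simp: matrix_transpose_mul matpow_commute)

lemma inner_symmetric_matrix:
  fixes A :: "real^'n^'n"
  assumes "transpose A = A"
  shows "inner x (A *v y) = inner (A *v x) y"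
  by (metis assms dot_lmul_matrix transpose_transpose vector_transpose_matrix)

lemma matpow_eigenvector:
  assumes "M *v x = K *\<^sub>R x"
  shows "matpow M t *v x = (K ^ t) *\<^sub>R x"
  by (induction t) (simp_all add: matrix_vector_mul_assoc[symmetric] matrix_vector_mult_scaleR assms)

definition krylov_columns :: "real^'n^'n \<Rightarrow> nat \<Rightarrow> (nat \<Rightarrow> 'n::finite) \<Rightarrow> nat \<Rightarrow> (real^'n) set" where
  "krylov_columns M m v j = {matpow M k *v axis (v r) 1 | k r. k < j \<and> r < m}"

lemma krylov_columns_mono: "j \<le> j' \<Longrightarrow> krylov_columns M m v j \<subseteq> krylov_columns M m v j'"
  unfolding krylov_columns_def by fastforce

lemma matpow_axis_in_span_if_krylov_stable:
  assumes stable: "krylov_columns M m v (Suc j) \<subseteq> span (krylov_columns M m v j)" and r: "r < m"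
  shows "matpow M t *v axis (v r) 1 \<in> span (krylov_columns M m v j)"
proof -
  let ?K = "krylov_columns M m v j"
  have "(*v) M ` ?K \<subseteq> krylov_columns M m v (Suc j)"
    unfolding krylov_columns_def by (force simp: matrix_vector_mul_assoc)
  hence "span ((*v) M ` ?K) \<subseteq> span ?K"
    using stable by (metis span_mono span_span subset_trans)
  hence invariant: "M *v y \<in> span ?K" if "y \<in> span ?K" for y
    using that by (metis image_eqI matrix_vector_mul_linear span_linear_image subsetD)
  have "matpow M 0 *v axis (v r) 1 \<in> krylov_columns M m v (Suc j)"
    unfolding krylov_columns_def using r by blast
  then show ?thesis
    using stable invariant by (induction t) (auto simp: matrix_vector_mul_assoc[symmetric])
qed

lemma matpow_axis_in_span_ctrb_columns:
  fixes M :: "real^'n::finite^'n"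
  assumes r: "r < m"
  shows "matpow M t *v axis (v r) 1 \<in> span (ctrb_columns M m v)"
proof -
  let ?n = "CARD('n)"
  have "\<exists>j\<le>?n. krylov_columns M m v (Suc j) \<subseteq> span (krylov_columns M m v j)"
  proof (rule ccontr)
    assume unstable: "\<not> ?thesis"
    have grows: "dim (krylov_columns M m v j) < dim (krylov_columns M m v (Suc j))"
      if "j \<le> ?n" for j
    proof (intro dim_psubset psubsetI)
      show "span (krylov_columns M m v j) \<subseteq> span (krylov_columns M m v (Suc j))"
        by (simp add: krylov_columns_mono span_mono)
      show "span (krylov_columns M m v j) \<noteq> span (krylov_columns M m v (Suc j))"
        using unstable that span_superset by blast
    qed
    have "j \<le> Suc ?n \<Longrightarrow> j \<le> dim (krylov_columns M m v j)" for j
    proof (induction j)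
      case (Suc j)
      then show ?case using grows[of j] by simp
    qed simp
    from this[of "Suc ?n"] have "Suc ?n \<le> dim (krylov_columns M m v (Suc ?n))" by simp
    moreover have "dim (krylov_columns M m v (Suc ?n)) \<le> ?n"
      by (rule dim_subset_UNIV_cart)
    ultimately show False by simp
  qed
  then obtain j where j: "j \<le> ?n" "krylov_columns M m v (Suc j) \<subseteq> span (krylov_columns M m v j)"
    by blast
  have "krylov_columns M m v j \<subseteq> ctrb_columns M m v"
    using j(1) unfolding krylov_columns_def ctrb_columns_def by fastforce
  then show ?thesis
    using matpow_axis_in_span_if_krylov_stable[OF j(2) r] span_mono by blast
qed

lemma dim_ctrb_columns_eq_CARD_iff:
  fixes M :: "real^'n::finite^'n"
  shows "dim (ctrb_columns M m v) = CARD('n) \<longleftrightarrow>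
    (\<forall>x. (\<forall>r<m. \<forall>t. inner x (matpow M t *v axis (v r) 1) = 0) \<longrightarrow> x = 0)"
proof
  assume full: "dim (ctrb_columns M m v) = CARD('n)"
  show "\<forall>x. (\<forall>r<m. \<forall>t. inner x (matpow M t *v axis (v r) 1) = 0) \<longrightarrow> x = 0"
  proof (intro allI impI)
    fix x :: "real^'n"
    assume orth: "\<forall>r<m. \<forall>t. inner x (matpow M t *v axis (v r) 1) = 0"
    have "ctrb_columns M m v \<subseteq> {y. inner x y = 0}"
      using orth unfolding ctrb_columns_def by auto
    hence "dim (ctrb_columns M m v) \<le> dim {y. inner x y = 0}" by (rule dim_subset)
    moreover have "x \<noteq> 0 \<Longrightarrow> dim {y. inner x y = 0} = CARD('n) - 1"
      by (simp add: dim_hyperplane)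
    ultimately have "x \<noteq> 0 \<Longrightarrow> CARD('n) \<le> CARD('n) - 1" using full by metis
    then show "x = 0" using zero_less_card_finite[where 'a='n] by linarith
  qed
next
  assume only_zero: "\<forall>x. (\<forall>r<m. \<forall>t. inner x (matpow M t *v axis (v r) 1) = 0) \<longrightarrow> x = 0"
  show "dim (ctrb_columns M m v) = CARD('n)"
  proof (rule ccontr)
    assume "dim (ctrb_columns M m v) \<noteq> CARD('n)"
    hence "dim (ctrb_columns M m v) < DIM(real^'n)"
      using dim_subset_UNIV_cart[of "ctrb_columns M m v"] by simp
    then obtain x :: "real^'n" where "x \<noteq> 0"
      and "\<And>y. y \<in> span (ctrb_columns M m v) \<Longrightarrow> orthogonal x y"
      using orthogonal_to_subspace_exists by blast
    with only_zero show False
      using matpow_axis_in_span_ctrb_columns by (fastforce simp: orthogonal_def)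
  qed
qed

definition fort :: "('n \<Rightarrow> 'n \<Rightarrow> bool) \<Rightarrow> 'n set \<Rightarrow> bool" where
  "fort E F \<longleftrightarrow> F \<noteq> {} \<and> (\<forall>c w. c \<notin> F \<longrightarrow> w \<in> F \<longrightarrow> E c w \<longrightarrow> (\<exists>u\<in>F. u \<noteq> w \<and> E c u))"

lemma qualclass_symmetric: "M \<in> qualclass E \<Longrightarrow> transpose M = M"
  unfolding qualclass_def by blast

lemma inner_matpow_axis:
  assumes "M \<in> qualclass E"
  shows "inner x (matpow M t *v axis i 1) = (matpow M t *v x) $ i"
  using inner_symmetric_matrix[OF transpose_matpow[OF qualclass_symmetric[OF assms]]]
  by (simp add: inner_axis)

lemma fort_of_uncontrolled_vector:
  fixes M :: "real^'n::finite^'n"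
  assumes M: "M \<in> qualclass E" and "x \<noteq> 0"
  shows "fort E {i. \<exists>t. (matpow M t *v x) $ i \<noteq> 0}" (is "fort E ?F")
  unfolding fort_def
proof (intro conjI allI impI)
  obtain i where "x $ i \<noteq> 0" using \<open>x \<noteq> 0\<close> by (auto simp: vec_eq_iff)
  then have "i \<in> ?F" by (intro CollectI exI[of _ 0]) simp
  then show "?F \<noteq> {}" by blast
next
  fix c w assume c: "c \<notin> ?F" and w: "w \<in> ?F" and "E c w"
  show "\<exists>u\<in>?F. u \<noteq> w \<and> E c u"
  proof (rule ccontr)
    assume no_other: "\<not> (\<exists>u\<in>?F. u \<noteq> w \<and> E c u)"
    have "c \<noteq> w" using c w by blast
    hence "M $ c $ w > 0" using M \<open>E c w\<close> unfolding qualclass_def by blast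
    have "(matpow M t *v x) $ w = 0" for t
    proof -
      define y where "y = matpow M t *v x"
      have "M $ c $ j * y $ j = 0" if "j \<noteq> w" for j
        using M c no_other that unfolding qualclass_def y_def
        by (cases "j = c"; cases "E c j") auto
      hence "(\<Sum>j\<in>UNIV - {w}. M $ c $ j * y $ j) = 0" by (intro sum.neutral) simp
      moreover have "(M *v y) $ c = M $ c $ w * y $ w + (\<Sum>j\<in>UNIV - {w}. M $ c $ j * y $ j)"
        unfolding matrix_vector_mult_def vec_lambda_beta by (rule sum.remove) simp_all
      moreover have "(M *v y) $ c = 0"
        using c unfolding y_def by (metis (mono_tags) matpow.simps(2) matrix_vector_mul_assoc mem_Collect_eq)
      ultimately show ?thesis using \<open>M $ c $ w > 0\<close> y_def by simp
    qed
    with w show False by blast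
  qed
qed

lemma SSC_if_forts_meet_inputs:
  assumes "\<And>F. fort E F \<Longrightarrow> \<exists>r<m. v r \<in> F"
  shows "SSC E m v"
  unfolding SSC_def dim_ctrb_columns_eq_CARD_iff
proof (intro ballI allI impI)
  fix M x assume M: "M \<in> qualclass E"
    and orth: "\<forall>r<m. \<forall>t. inner x (matpow M t *v axis (v r) 1) = 0"
  show "x = 0"
  proof (rule ccontr)
    assume "x \<noteq> 0"
    then obtain r t where "r < m" "(matpow M t *v x) $ v r \<noteq> 0"
      using assms[OF fort_of_uncontrolled_vector[OF M]] by blast
    with orth show False by (simp add: inner_matpow_axis[OF M])
  qed
qed

lemma not_SSC_if_eigenvector:
  assumes M: "M \<in> qualclass E" and "x \<noteq> 0" and "M *v x = K *\<^sub>R x"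
    and inputs: "\<And>r. r < m \<Longrightarrow> x $ v r = 0"
  shows "\<not> SSC E m v"
proof -
  have "inner x (matpow M t *v axis (v r) 1) = 0" if "r < m" for r t
    using inputs[OF that] by (simp add: inner_matpow_axis[OF M] matpow_eigenvector[OF \<open>M *v x = K *\<^sub>R x\<close>])
  with M \<open>x \<noteq> 0\<close> show ?thesis
    unfolding SSC_def dim_ctrb_columns_eq_CARD_iff by blast
qed

text \<open>The diagonal repairs the kernel condition where \<open>x\<close> is nonzero, and a large negative shift
  makes the self-loop weights negative.\<close>
lemma qualclass_eigenvector_from_weights:
  fixes A :: "'n::finite \<Rightarrow> 'n \<Rightarrow> real" and x :: "'n \<Rightarrow> real"
  assumes irrefl: "\<And>i. \<not> E i i"
    and sym: "\<And>i j. A i j = A j i"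
    and pos: "\<And>i j. E i j \<Longrightarrow> A i j > 0" and zero: "\<And>i j. \<not> E i j \<Longrightarrow> A i j = 0"
    and kernel: "\<And>i. x i = 0 \<Longrightarrow> (\<Sum>j\<in>UNIV. A i j * x j) = 0"
  shows "\<exists>M\<in>qualclass E. \<exists>K. M *v vec_lambda x = K *\<^sub>R vec_lambda x"
proof -
  define d where "d i = (if x i = 0 then 0 else - (\<Sum>j\<in>UNIV. A i j * x j) / x i)" for i
  define K where "K = 1 + (\<Sum>i\<in>UNIV. \<bar>d i\<bar> + (\<Sum>j\<in>UNIV. A i j))"
  define M :: "real^'n^'n" where "M = (\<chi> i j. if i = j then d i - K else A i j)"
  have A_nonneg: "A i j \<ge> 0" for i j
    using pos[of i j] zero[of i j] by (cases "E i j") auto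
  have row: "(\<Sum>j\<in>UNIV. M $ i $ j * x j) = (d i - K) * x i + (\<Sum>j\<in>UNIV. A i j * x j)" for i
  proof -
    have "(\<Sum>j\<in>UNIV. M $ i $ j * x j) = (d i - K) * x i + (\<Sum>j\<in>UNIV - {i}. A i j * x j)"
      by (simp add: M_def sum.remove[of UNIV i])
    also have "(\<Sum>j\<in>UNIV - {i}. A i j * x j) = (\<Sum>j\<in>UNIV. A i j * x j)"
      using zero[OF irrefl] by (simp add: sum.remove[of UNIV i])
    finally show ?thesis .
  qed
  have "(\<Sum>j\<in>UNIV. M $ i $ j * x j) = - K * x i" for i
    using row[of i] kernel[of i] by (cases "x i = 0") (simp_all add: d_def field_simps)
  then have "M *v vec_lambda x = (- K) *\<^sub>R vec_lambda x"
    by (simp add: vec_eq_iff matrix_vector_mult_def)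
  moreover have "M \<in> qualclass E"
    unfolding qualclass_def
  proof (intro CollectI conjI allI impI)
    show "transpose M = M"
      by (simp add: transpose_def M_def vec_eq_iff sym)
  next
    fix i j :: 'n assume "i \<noteq> j"
    then show "E i j \<Longrightarrow> 0 < M $ i $ j" "\<not> E i j \<Longrightarrow> M $ i $ j = 0"
      by (simp_all add: M_def pos zero)
  next
    fix i :: 'n
    have "(\<Sum>j\<in>{j. E i j}. M $ i $ j) = (\<Sum>j\<in>UNIV. A i j)"
      by (rule sum.mono_neutral_cong_left) (auto simp: M_def zero irrefl)
    moreover have "\<bar>d i\<bar> + (\<Sum>j\<in>UNIV. A i j) \<le> (\<Sum>i\<in>UNIV. \<bar>d i\<bar> + (\<Sum>j\<in>UNIV. A i j))"
      by (rule member_le_sum) (auto intro!: add_nonneg_nonneg sum_nonneg A_nonneg)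
    ultimately show "\<exists>a<0. M $ i $ i = - (\<Sum>j\<in>{j. E i j}. M $ i $ j) + a"
      by (intro exI[of _ "d i - K + (\<Sum>j\<in>UNIV. A i j)"]) (auto simp: M_def K_def)
  qed
  ultimately show ?thesis by blast
qed

lemma is_gpath_iff: "is_gpath E xs \<longleftrightarrow> xs \<noteq> [] \<and> distinct xs \<and> successively E xs"
  unfolding is_gpath_def successively_conv_nth by blast

definition slice :: "'a list \<Rightarrow> nat \<Rightarrow> nat \<Rightarrow> 'a list" where
  "slice xs i j = take (Suc j - i) (drop i xs)"

lemma successively_slice:
  assumes "successively P xs"
  shows "successively P (slice xs i j)"
proof -
  have "successively P (drop i xs)"
    using assms by (metis append_take_drop_id successively_append_iff)
  then show ?thesis
    unfolding slice_def by (metis append_take_drop_id successively_append_iff)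
qed

context
  fixes xs :: "'a list" and i j :: nat
  assumes ij: "i \<le> j" "j < length xs"
begin

lemma length_slice: "length (slice xs i j) = Suc j - i"
  using ij by (simp add: slice_def)

lemma nth_slice: "k < Suc j - i \<Longrightarrow> slice xs i j ! k = xs ! (i + k)"
  using ij by (simp add: slice_def)

lemma hd_slice: "hd (slice xs i j) = xs ! i"
  using ij by (simp add: slice_def hd_drop_conv_nth)

lemma last_slice: "last (slice xs i j) = xs ! j"
proof -
  have "slice xs i j \<noteq> []" using ij length_slice by auto
  then have "last (slice xs i j) = slice xs i j ! (j - i)"
    by (simp add: last_conv_nth length_slice)
  also have "\<dots> = xs ! j" using ij by (simp add: nth_slice)
  finally show ?thesis .
qed

lemma is_gpath_slice:
  assumes "is_gpath E xs"
  shows "is_gpath E (slice xs i j)"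
  using assms ij length_slice successively_slice unfolding is_gpath_iff by (auto simp: slice_def)

end

lemma set_slice_subset: "set (slice xs i j) \<subseteq> set xs"
  unfolding slice_def by (meson in_set_dropD in_set_takeD subsetI)

definition nonbacktracking :: "('n \<Rightarrow> 'n \<Rightarrow> bool) \<Rightarrow> 'n list \<Rightarrow> bool" where
  "nonbacktracking E ws \<longleftrightarrow>
     successively E ws \<and> (\<forall>i. Suc (Suc i) < length ws \<longrightarrow> ws ! i \<noteq> ws ! Suc (Suc i))"

lemma nonbacktracking_if_distinct: "distinct ws \<Longrightarrow> successively E ws \<Longrightarrow> nonbacktracking E ws"
  unfolding nonbacktracking_def by (simp add: nth_eq_iff_index_eq)

lemma nonbacktracking_append:
  assumes xs: "nonbacktracking E xs" and ys: "nonbacktracking E ys" and "xs \<noteq> []" "ys \<noteq> []"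
    and "E (last xs) (hd ys)"
    and no_return_left: "2 \<le> length xs \<Longrightarrow> xs ! (length xs - 2) \<noteq> hd ys"
    and no_return_right: "2 \<le> length ys \<Longrightarrow> last xs \<noteq> ys ! 1"
  shows "nonbacktracking E (xs @ ys)"
  unfolding nonbacktracking_def
proof (intro conjI allI impI)
  show "successively E (xs @ ys)"
    using assms by (simp add: nonbacktracking_def successively_append_iff)
next
  fix i assume i: "Suc (Suc i) < length (xs @ ys)"
  consider "Suc (Suc i) < length xs" | "i = length xs - 2" "2 \<le> length xs"
    | "i = length xs - 1" | "length xs \<le> i" by linarith
  then show "(xs @ ys) ! i \<noteq> (xs @ ys) ! Suc (Suc i)"
  proof cases
    case 1
    then show ?thesis using xs by (simp add: nonbacktracking_def nth_append)
  next
    case 2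
    then show ?thesis using \<open>ys \<noteq> []\<close> no_return_left by (auto simp: nth_append hd_conv_nth)
  next
    case 3
    then show ?thesis using \<open>xs \<noteq> []\<close> i no_return_right by (auto simp: nth_append last_conv_nth)
  next
    case 4
    then show ?thesis
      using i ys by (auto simp: nonbacktracking_def nth_append Suc_diff_le)
  qed
qed

locale forest =
  fixes E :: "'n::finite \<Rightarrow> 'n \<Rightarrow> bool"
  assumes simple: "simple_graph E" and acyclic: "graph_acyclic E"
begin

lemma sym: "E x y \<Longrightarrow> E y x"
  using simple unfolding simple_graph_def by blast

lemma irrefl: "\<not> E x x"
  using simple unfolding simple_graph_def by blast

lemma gpath_chord:
  assumes p: "is_gpath E p" and "i < j" "j < length p" and "E (p ! i) (p ! j)"
  shows "j = Suc i"
proof (rule ccontr)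
  assume "j \<noteq> Suc i"
  hence "length (slice p i j) \<ge> 3" using assms length_slice[of i j p] by simp
  moreover have "E (last (slice p i j)) (hd (slice p i j))"
    using assms hd_slice[of i j p] last_slice[of i j p] by (simp add: sym)
  moreover have "is_gpath E (slice p i j)" using is_gpath_slice[OF _ _ p] assms by simp
  ultimately show False using acyclic unfolding graph_acyclic_def by blast
qed

lemma induced_path_from_gpath:
  assumes p: "is_gpath E p"
  shows "induced_path_from E (set p) (hd p)"
  unfolding induced_path_from_def
proof (intro exI[of _ p] conjI allI impI)
  fix i j assume ij: "i < length p \<and> j < length p \<and> E (p ! i) (p ! j)"
  consider "i < j" | "j < i" | "i = j" by linarith
  then show "i = Suc j \<or> j = Suc i"
    by cases (use ij gpath_chord[OF p] irrefl in \<open>auto dest: sym\<close>)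
qed (use p in simp_all)

lemma gpath_segment:
  assumes p: "is_gpath E p" and "a \<in> set p" "b \<in> set p"
  obtains s where "is_gpath E s" "hd s = a" "last s = b" "set s \<subseteq> set p"
proof -
  obtain i j where i: "i < length p" "a = p ! i" and j: "j < length p" "b = p ! j"
    using assms by (auto simp: in_set_conv_nth)
  show thesis
  proof (cases "i \<le> j")
    case True
    show ?thesis
      by (rule that[of "slice p i j"])
        (use True i j in \<open>simp_all add: is_gpath_slice p hd_slice last_slice set_slice_subset\<close>)
  next
    case False
    have segment: "is_gpath E (slice p j i)" using is_gpath_slice[OF _ i(1) p] False by simp
    then have "successively (\<lambda>x y. E y x) (slice p j i)"
      unfolding is_gpath_iff by (metis successively_mono sym)
    with segment have "is_gpath E (rev (slice p j i))" by (simp add: is_gpath_iff)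
    then show ?thesis
      by (rule that[of "rev (slice p j i)"])
        (use False i j in \<open>simp_all add: hd_rev last_rev hd_slice last_slice set_slice_subset\<close>)
  qed
qed

lemma disjoint_gpaths_single_edge:
  assumes p: "is_gpath E p" and q: "is_gpath E q" and disjoint: "set p \<inter> set q = {}"
    and x: "x1 \<in> set p" "x2 \<in> set p" and y: "y1 \<in> set q" "y2 \<in> set q"
    and "E x1 y1" "E x2 y2"
  shows "x1 = x2 \<and> y1 = y2"
proof (rule ccontr)
  assume different: "\<not> (x1 = x2 \<and> y1 = y2)"
  obtain s1 where s1: "is_gpath E s1" "hd s1 = x1" "last s1 = x2" "set s1 \<subseteq> set p"
    using gpath_segment[OF p x] .
  obtain s2 where s2: "is_gpath E s2" "hd s2 = y2" "last s2 = y1" "set s2 \<subseteq> set q"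
    using gpath_segment[OF q y(2) y(1)] .
  have "s1 \<noteq> []" "s2 \<noteq> []" using s1 s2 by (auto simp: is_gpath_iff)
  have "is_gpath E (s1 @ s2)"
    using s1 s2 \<open>s1 \<noteq> []\<close> \<open>s2 \<noteq> []\<close> disjoint assms
    unfolding is_gpath_iff by (auto simp: successively_append_iff)
  moreover have "E (last (s1 @ s2)) (hd (s1 @ s2))"
    using s1 s2 \<open>s1 \<noteq> []\<close> \<open>s2 \<noteq> []\<close> assms by (simp add: sym)
  moreover have "length (s1 @ s2) \<ge> 3"
  proof (rule ccontr)
    assume "\<not> length (s1 @ s2) \<ge> 3"
    moreover have "length s1 \<ge> 1" "length s2 \<ge> 1"
      using \<open>s1 \<noteq> []\<close> \<open>s2 \<noteq> []\<close> by (auto simp: Suc_le_eq)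
    ultimately have "length s1 = 1" "length s2 = 1" by simp_all
    hence "x1 = x2" "y1 = y2" using s1 s2 by (auto simp: length_Suc_conv)
    with different show False by simp
  qed
  ultimately show False using acyclic unfolding graph_acyclic_def by blast
qed

text \<open>A repetition at minimal distance \<open>d\<close> encloses a cycle when \<open>d \<ge> 3\<close>; the cases \<open>d = 1, 2\<close>
  are excluded by irreflexivity and by not backtracking.\<close>
lemma distinct_if_nonbacktracking:
  assumes w: "nonbacktracking E ws"
  shows "distinct ws"
proof (rule ccontr)
  let ?repeats = "\<lambda>d. \<exists>i. i + d < length ws \<and> 0 < d \<and> ws ! i = ws ! (i + d)"
  assume "\<not> distinct ws"
  then obtain i j where "i < j" "j < length ws" "ws ! i = ws ! j"
    by (metis distinct_conv_nth linorder_neqE_nat)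
  hence "?repeats (j - i)" by (intro exI[of _ i]) simp
  then obtain d where "?repeats d" and minimal: "\<And>d'. d' < d \<Longrightarrow> \<not> ?repeats d'"
    using exists_least_iff[of ?repeats] by blast
  then obtain i where i: "i + d < length ws" "0 < d" "ws ! i = ws ! (i + d)" by blast
  have adj: "E (ws ! k) (ws ! Suc k)" if "Suc k < length ws" for k
    using w that successively_nth unfolding nonbacktracking_def by blast
  consider "d = 1" | "d = 2" | "d \<ge> 3" using i by linarith
  then show False
  proof cases
    case 1
    then show ?thesis using adj[of i] i irrefl by simp
  next
    case 2
    then show ?thesis using w i unfolding nonbacktracking_def by (simp add: numeral_2_eq_2)
  next
    case 3
    let ?cycle = "slice ws i (i + d - 1)"
    have ij: "i \<le> i + d - 1" "i + d - 1 < length ws" using i by auto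
    have "length ?cycle = d" using length_slice[OF ij] i by simp
    have "distinct ?cycle"
    proof (rule ccontr)
      assume "\<not> distinct ?cycle"
      then obtain p q where "p < q" "q < d" "?cycle ! p = ?cycle ! q"
        using \<open>length ?cycle = d\<close> by (metis distinct_conv_nth linorder_neqE_nat)
      hence "?repeats (q - p)"
        using nth_slice[OF ij] i by (intro exI[of _ "i + p"]) (auto simp: add.assoc)
      moreover have "q - p < d" using \<open>q < d\<close> by simp
      ultimately show False using minimal by blast
    qed
    moreover have "successively E ?cycle"
      using w successively_slice unfolding nonbacktracking_def by blast
    ultimately have "is_gpath E ?cycle"
      using \<open>length ?cycle = d\<close> i unfolding is_gpath_iff by auto
    moreover have "E (last ?cycle) (hd ?cycle)"
      using adj[of "i + d - 1"] i last_slice[OF ij] hd_slice[OF ij] by simp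
    ultimately show False
      using acyclic 3 \<open>length ?cycle = d\<close> unfolding graph_acyclic_def by metis
  qed
qed

lemma length_nonbacktracking_le: "nonbacktracking E ws \<Longrightarrow> length ws \<le> CARD('n)"
  using distinct_if_nonbacktracking by (metis card_mono distinct_card finite subset_UNIV)

end

definition splitting_sign :: "('n \<Rightarrow> 'n \<Rightarrow> bool) \<Rightarrow> 'n set \<Rightarrow> 'n set \<Rightarrow> ('n \<Rightarrow> bool) \<Rightarrow> bool" where
  "splitting_sign E U F s \<longleftrightarrow> (\<forall>c\<in>U - F.
     (\<exists>w1 w2. w1 \<noteq> w2 \<and> w1 \<in> U \<inter> F \<and> w2 \<in> U \<inter> F \<and> E c w1 \<and> E c w2) \<longrightarrow>
     (\<exists>w\<in>U \<inter> F. E c w \<and> s w) \<and> (\<exists>w\<in>U \<inter> F. E c w \<and> \<not> s w))"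

context forest
begin

lemma exists_leaf:
  assumes "U \<noteq> {}"
  obtains l where "l \<in> U" "\<And>u u'. u \<in> U \<Longrightarrow> u' \<in> U \<Longrightarrow> E l u \<Longrightarrow> E l u' \<Longrightarrow> u = u'"
proof -
  let ?in_U = "\<lambda>xs. is_gpath E xs \<and> set xs \<subseteq> U"
  obtain u0 where "u0 \<in> U" using assms by blast
  then have "?in_U [u0]" unfolding is_gpath_def by simp
  moreover have "length xs < Suc (card U)" if "?in_U xs" for xs
    using that distinct_card[of xs] card_mono[of U "set xs"] by (simp add: is_gpath_def)
  ultimately obtain xs where xs: "?in_U xs" and longest: "\<And>ys. ?in_U ys \<Longrightarrow> length ys \<le> length xs"
    using ex_has_greatest_nat[of ?in_U "[u0]" length "Suc (card U)"] by blast
  have "xs \<noteq> []" using xs by (simp add: is_gpath_def)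
  have only_neighbour: "u = xs ! (length xs - 2)" if "u \<in> U" "E (last xs) u" for u
  proof -
    have "u \<in> set xs"
    proof (rule ccontr)
      assume "u \<notin> set xs"
      then have "?in_U (xs @ [u])"
        using xs that \<open>xs \<noteq> []\<close> unfolding is_gpath_iff by (auto simp: successively_append_iff)
      with longest[of "xs @ [u]"] show False by simp
    qed
    then obtain i where i: "i < length xs" "u = xs ! i" by (auto simp: in_set_conv_nth)
    have last: "last xs = xs ! (length xs - 1)" using \<open>xs \<noteq> []\<close> by (simp add: last_conv_nth)
    have "i \<noteq> length xs - 1" using that(2) last i irrefl by auto
    then have "i < length xs - 1" using i by simp
    moreover have "E (xs ! i) (xs ! (length xs - 1))" using that(2) last i by (simp add: sym)
    ultimately have "length xs - 1 = Suc i" using gpath_chord[of xs] xs \<open>xs \<noteq> []\<close> by simp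
    then have "i = length xs - 2" by simp
    then show ?thesis using i by simp
  qed
  show thesis
    by (rule that[of "last xs"]) (use only_neighbour xs \<open>xs \<noteq> []\<close> in auto)
qed

lemma splitting_sign_add_leaf:
  assumes s: "splitting_sign E (U - {l}) F s" and "l \<in> U"
    and leaf: "\<And>u u'. u \<in> U \<Longrightarrow> u' \<in> U \<Longrightarrow> E l u \<Longrightarrow> E l u' \<Longrightarrow> u = u'"
  shows "\<exists>s'. splitting_sign E U F s'"
proof (cases "l \<in> F")
  case False
  have "splitting_sign E U F s"
    unfolding splitting_sign_def
  proof (intro ballI impI)
    fix c assume "c \<in> U - F"
      and two: "\<exists>w1 w2. w1 \<noteq> w2 \<and> w1 \<in> U \<inter> F \<and> w2 \<in> U \<inter> F \<and> E c w1 \<and> E c w2"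
    then have "c \<in> U - {l} - F" using leaf by blast
    with two False s show "(\<exists>w\<in>U \<inter> F. E c w \<and> s w) \<and> (\<exists>w\<in>U \<inter> F. E c w \<and> \<not> s w)"
      unfolding splitting_sign_def by blast
  qed
  then show ?thesis by blast
next
  case True
  text \<open>The leaf only matters for its unique neighbour; give it the sign opposite to some other
    neighbour in \<open>F\<close> of that vertex, if there is one.\<close>
  let ?beyond = "\<lambda>w. \<exists>c\<in>U. E l c \<and> w \<in> (U - {l}) \<inter> F \<and> E c w"
  define s' where "s' = s(l := (if \<exists>w. ?beyond w then \<not> s (SOME w. ?beyond w) else True))"
  have "splitting_sign E U F s'"
    unfolding splitting_sign_def
  proof (intro ballI impI)
    fix c assume c: "c \<in> U - F"
      and two: "\<exists>w1 w2. w1 \<noteq> w2 \<and> w1 \<in> U \<inter> F \<and> w2 \<in> U \<inter> F \<and> E c w1 \<and> E c w2"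
    show "(\<exists>w\<in>U \<inter> F. E c w \<and> s' w) \<and> (\<exists>w\<in>U \<inter> F. E c w \<and> \<not> s' w)"
    proof (cases "E c l")
      case True
      then obtain w where "w \<in> (U - {l}) \<inter> F" "E c w" using two by blast
      then have "?beyond w" using True c by (blast intro: sym)
      then have "?beyond (SOME w. ?beyond w)" by (rule someI)
      then obtain c0 w0 where "c0 \<in> U" "E l c0" "w0 \<in> (U - {l}) \<inter> F" "E c0 w0"
        and w0: "w0 = (SOME w. ?beyond w)" by blast
      moreover have "c0 = c" using leaf \<open>c0 \<in> U\<close> \<open>E l c0\<close> c True by (blast intro: sym)
      moreover have "s' l = (\<not> s w0)" "s' w0 = s w0"
        using \<open>?beyond w\<close> \<open>w0 \<in> (U - {l}) \<inter> F\<close> w0 by (auto simp: s'_def)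
      ultimately show ?thesis using True \<open>l \<in> U\<close> \<open>l \<in> F\<close> by (cases "s w0") auto
    next
      case False
      then have "c \<in> U - {l} - F"
          "\<exists>w1 w2. w1 \<noteq> w2 \<and> w1 \<in> (U - {l}) \<inter> F \<and> w2 \<in> (U - {l}) \<inter> F \<and> E c w1 \<and> E c w2"
        using c two \<open>l \<in> F\<close> by blast+
      then have "(\<exists>w\<in>(U - {l}) \<inter> F. E c w \<and> s w) \<and> (\<exists>w\<in>(U - {l}) \<inter> F. E c w \<and> \<not> s w)"
        using s unfolding splitting_sign_def by blast
      then show ?thesis by (auto simp: s'_def)
    qed
  qed
  then show ?thesis by blast
qed

lemma exists_splitting_sign: "\<exists>s. splitting_sign E U F s"
proof (induction "card U" arbitrary: U rule: less_induct)
  case less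
  show ?case
  proof (cases "U = {}")
    case True
    then show ?thesis by (auto simp: splitting_sign_def)
  next
    case False
    then obtain l where "l \<in> U" "\<And>u u'. u \<in> U \<Longrightarrow> u' \<in> U \<Longrightarrow> E l u \<Longrightarrow> E l u' \<Longrightarrow> u = u'"
      using exists_leaf by blast
    moreover have "card (U - {l}) < card U" using \<open>l \<in> U\<close> by (metis card_Diff1_less finite)
    ultimately show ?thesis using less splitting_sign_add_leaf by blast
  qed
qed


lemma fort_eigenvector:
  assumes fort: "fort E F"
  obtains M x K where "M \<in> qualclass E" "x \<noteq> 0" "M *v x = K *\<^sub>R x" "\<And>i. i \<notin> F \<Longrightarrow> x $ i = 0"
proof -
  obtain s where s: "splitting_sign E UNIV F s" using exists_splitting_sign by blast
  define x :: "'n \<Rightarrow> real" where "x i = (if i \<notin> F then 0 else if s i then 1 else -1)" for i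
  define alike where "alike c w = {u \<in> F. E c u \<and> s u = s w}" for c w
  define A where "A i j = (if \<not> E i j then 0 else if i \<notin> F \<and> j \<in> F then 1 / card (alike i j)
    else if i \<in> F \<and> j \<notin> F then 1 / card (alike j i) else 1)" for i j
  have alike_nonempty: "alike c w \<noteq> {}" if "w \<in> F" "E c w" for c w
    using that by (auto simp: alike_def)
  have kernel: "(\<Sum>j\<in>UNIV. A i j * x j) = 0" if "x i = 0" for i
  proof -
    have "i \<notin> F" using that by (auto simp: x_def split: if_splits)
    let ?P = "{u \<in> F. E i u \<and> s u}" and ?N = "{u \<in> F. E i u \<and> \<not> s u}"
    text \<open>Each sign class of neighbours in \<open>F\<close> contributes \<open>\<plusminus>1\<close> in total, and by the fort
      property both classes are empty or both are nonempty.\<close>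
    have "(\<Sum>j\<in>UNIV. A i j * x j) = (\<Sum>j\<in>?P \<union> ?N. A i j * x j)"
      by (rule sum.mono_neutral_right) (auto simp: A_def x_def)
    also have "\<dots> = (\<Sum>j\<in>?P. 1 / card ?P) + (\<Sum>j\<in>?N. - (1 / card ?N))"
      by (subst sum.union_disjoint) (auto intro!: sum.cong simp: A_def x_def alike_def \<open>i \<notin> F\<close>)
    also have "\<dots> = (if ?P = {} then 0 else 1) - (if ?N = {} then 0 else 1)"
      by (simp add: sum_negf)
    also have "\<dots> = 0"
    proof -
      have "?P \<noteq> {} \<and> ?N \<noteq> {}" if "w \<in> F" "E i w" for w
        using fort that \<open>i \<notin> F\<close> s unfolding fort_def splitting_sign_def by blast
      then show ?thesis by fastforce
    qed
    finally show ?thesis .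
  qed
  have "A i j > 0" if "E i j" for i j
    using that alike_nonempty[of j i] alike_nonempty[of i j] by (auto simp: A_def card_gt_0_iff sym)
  moreover have "A i j = A j i" for i j
    by (auto simp: A_def intro: sym)
  ultimately obtain M K where "M \<in> qualclass E" "M *v vec_lambda x = K *\<^sub>R vec_lambda x"
    using qualclass_eigenvector_from_weights[of E A x] irrefl kernel by (auto simp: A_def)
  moreover have "vec_lambda x \<noteq> 0"
    using fort by (auto simp: fort_def x_def vec_eq_iff split: if_splits)
  ultimately show thesis
    using that[of M "vec_lambda x" K] by (simp add: x_def)
qed

lemma fort_meets_inputs_if_SSC:
  assumes "SSC E m v" and "fort E F"
  shows "\<exists>r<m. v r \<in> F"
  using fort_eigenvector[OF assms(2)] not_SSC_if_eigenvector assms(1) by metis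

end

lemma path_decomposition_gpaths:
  assumes "path_decomposition E m v V"
  obtains P where "\<And>r. r < m \<Longrightarrow> is_gpath E (P r) \<and> set (P r) = V r \<and> hd (P r) = v r"
proof -
  have "\<forall>r<m. \<exists>xs. is_gpath E xs \<and> set xs = V r \<and> hd xs = v r"
    using assms unfolding path_decomposition_def induced_path_from_def by blast
  then show thesis using that by metis
qed

lemma exists_first_nth_mem:
  assumes "hd xs \<notin> F" "set xs \<inter> F \<noteq> {}"
  shows "\<exists>k. 0 < k \<and> k < length xs \<and> xs ! k \<in> F \<and> (\<forall>i<k. xs ! i \<notin> F)"
proof -
  let ?enters = "\<lambda>k. k < length xs \<and> xs ! k \<in> F"
  have "\<exists>j. ?enters j" using assms(2) by (auto simp: in_set_conv_nth)
  then obtain k where k: "?enters k" and first: "\<And>i. i < k \<Longrightarrow> \<not> ?enters i"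
    using exists_least_iff[of ?enters] by blast
  moreover have "k \<noteq> 0"
  proof
    assume "k = 0"
    with k assms(1) show False by (cases xs) auto
  qed
  ultimately show ?thesis by force
qed

context forest
begin

lemma fort_exit:
  assumes fort: "fort E F" and p: "is_gpath E p"
    and k: "0 < k" "k < length p" "p ! k \<in> F" and outside: "\<And>i. i < k \<Longrightarrow> p ! i \<notin> F"
  obtains y where "y \<in> F" "y \<notin> set p" "E (p ! (k - 1)) y"
proof -
  have "Suc (k - 1) < length p" using k by simp
  then have "E (p ! (k - 1)) (p ! Suc (k - 1))" using p unfolding is_gpath_def by blast
  then have "E (p ! (k - 1)) (p ! k)" using k(1) by simp
  moreover have "p ! (k - 1) \<notin> F" using outside k(1) by simp
  ultimately obtain y where y: "y \<in> F" "y \<noteq> p ! k" "E (p ! (k - 1)) y"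
    using fort k(3) unfolding fort_def by blast
  have "y \<notin> set p"
  proof
    assume "y \<in> set p"
    then obtain e where e: "e < length p" "y = p ! e" by (auto simp: in_set_conv_nth)
    consider "e < k - 1" | "e = k - 1" | "k - 1 < e" by linarith
    then show False
    proof cases
      case 1
      then have "k - 1 = Suc e" using gpath_chord[OF p 1] y(3) e k by (simp add: sym)
      then show ?thesis using outside[of e] y(1) e by simp
    next
      case 2
      then show ?thesis using y(3) e irrefl by simp
    next
      case 3
      then have "e = k" using gpath_chord[OF p 3] y(3) e k by simp
      then show ?thesis using y(2) e by simp
    qed
  qed
  then show thesis using that y by blast
qed


text \<open>Following the edges from each \<open>a r\<close> into another path and then along that path to its own
  marked vertex yields arbitrarily long non-backtracking walks, which a finite forest does not have.\<close>
lemma no_path_chase: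
  assumes paths: "\<And>r. r \<in> I \<Longrightarrow> is_gpath E (P r)"
    and disjoint: "\<And>r r'. r \<in> I \<Longrightarrow> r' \<in> I \<Longrightarrow> r \<noteq> r' \<Longrightarrow> set (P r) \<inter> set (P r') = {}"
    and marked: "\<And>r. r \<in> I \<Longrightarrow> a r \<in> set (P r)"
    and chase: "\<And>r. r \<in> I \<Longrightarrow> \<exists>r'\<in>I. r' \<noteq> r \<and> (\<exists>y\<in>set (P r'). y \<noteq> a r' \<and> E (a r) y)"
    and "r0 \<in> I"
  shows False
proof -
  have "\<exists>r\<in>I. \<exists>ws. nonbacktracking E ws \<and> ws \<noteq> [] \<and> N \<le> length ws \<and> last ws = a r \<and>
          (2 \<le> length ws \<longrightarrow> ws ! (length ws - 2) \<in> set (P r))" for N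
  proof (induction N)
    case 0
    show ?case
      using \<open>r0 \<in> I\<close> by (intro bexI[of _ r0] exI[of _ "[a r0]"]) (simp_all add: nonbacktracking_def)
  next
    case (Suc N)
    then obtain r ws where r: "r \<in> I" and ws: "nonbacktracking E ws" "ws \<noteq> []" "N \<le> length ws"
      "last ws = a r" "2 \<le> length ws \<longrightarrow> ws ! (length ws - 2) \<in> set (P r)" by blast
    obtain r' y where r': "r' \<in> I" "r' \<noteq> r" and y: "y \<in> set (P r')" "y \<noteq> a r'" "E (a r) y"
      using chase[OF r] by blast
    obtain s where s: "is_gpath E s" "hd s = y" "last s = a r'" "set s \<subseteq> set (P r')"
      using gpath_segment[OF paths[OF r'(1)] y(1) marked[OF r'(1)]] .
    have "s \<noteq> []" using s by (simp add: is_gpath_iff)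
    moreover have "length s \<noteq> 1" using s y(2) by (auto simp: length_Suc_conv)
    ultimately have "2 \<le> length s" by (cases "length s") auto
    have "set (P r) \<inter> set (P r') = {}" using disjoint r r' by blast
    have "nonbacktracking E (ws @ s)"
    proof (rule nonbacktracking_append[OF ws(1) _ ws(2) \<open>s \<noteq> []\<close>])
      show "nonbacktracking E s"
        using s by (intro nonbacktracking_if_distinct) (simp_all add: is_gpath_iff)
      show "E (last ws) (hd s)" using ws(4) s(2) y(3) by simp
      show "ws ! (length ws - 2) \<noteq> hd s" if "2 \<le> length ws"
      proof -
        have "ws ! (length ws - 2) \<in> set (P r)" using ws(5) that by blast
        then show ?thesis using s(2) y(1) \<open>set (P r) \<inter> set (P r') = {}\<close> by auto
      qed
      show "last ws \<noteq> s ! 1" if "2 \<le> length s"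
      proof -
        have "s ! 1 \<in> set (P r')" using that s(4) nth_mem[of 1 s] by auto
        then show ?thesis
          using ws(4) marked[OF r] \<open>set (P r) \<inter> set (P r') = {}\<close> by auto
      qed
    qed
    moreover have "(ws @ s) ! (length (ws @ s) - 2) = s ! (length s - 2)"
    proof -
      have "length (ws @ s) - 2 = length ws + (length s - 2)" using \<open>2 \<le> length s\<close> by simp
      then show ?thesis by (metis nth_append_length_plus)
    qed
    ultimately show ?case
      using r'(1) s ws \<open>2 \<le> length s\<close> \<open>s \<noteq> []\<close>
      by (intro bexI[of _ r'] exI[of _ "ws @ s"]) auto
  qed
  then obtain ws where "nonbacktracking E ws" "Suc CARD('n) \<le> length ws" by blast
  then show False using length_nonbacktracking_le by fastforce
qed

lemma fort_meets_inputs_if_path_decomposition: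
  assumes decomposition: "path_decomposition E m v V" and fort: "fort E F"
  shows "\<exists>r<m. v r \<in> F"
proof (rule ccontr)
  assume no_input: "\<not> (\<exists>r<m. v r \<in> F)"
  obtain P where P: "\<And>r. r < m \<Longrightarrow> is_gpath E (P r) \<and> set (P r) = V r \<and> hd (P r) = v r"
    using path_decomposition_gpaths[OF decomposition] by blast
  have cover: "\<exists>r<m. x \<in> set (P r)" for x
    using decomposition P unfolding path_decomposition_def by blast
  have disjoint: "set (P r) \<inter> set (P r') = {}" if "r < m" "r' < m" "r \<noteq> r'" for r r'
    using decomposition P that unfolding path_decomposition_def by simp
  define I where "I = {r. r < m \<and> set (P r) \<inter> F \<noteq> {}}"
  have "\<forall>r\<in>I. \<exists>k. 0 < k \<and> k < length (P r) \<and> P r ! k \<in> F \<and> (\<forall>i<k. P r ! i \<notin> F)"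
  proof
    fix r assume "r \<in> I"
    then have "r < m" "set (P r) \<inter> F \<noteq> {}" by (simp_all add: I_def)
    moreover have "hd (P r) \<notin> F" using P[OF \<open>r < m\<close>] no_input \<open>r < m\<close> by auto
    ultimately show "\<exists>k. 0 < k \<and> k < length (P r) \<and> P r ! k \<in> F \<and> (\<forall>i<k. P r ! i \<notin> F)"
      using exists_first_nth_mem by blast
  qed
  from bchoice[OF this] obtain k where k: "\<And>r. r \<in> I \<Longrightarrow> 0 < k r \<and> k r < length (P r) \<and>
      P r ! k r \<in> F \<and> (\<forall>i<k r. P r ! i \<notin> F)"
    by blast
  obtain x where "x \<in> F" using fort unfolding fort_def by blast
  then obtain r0 where "r0 \<in> I" using cover unfolding I_def by blast
  show False
  proof (rule no_path_chase[of I P "\<lambda>r. P r ! (k r - 1)" r0])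
    fix r assume "r \<in> I"
    then have "r < m" by (simp add: I_def)
    have kr: "0 < k r" "k r < length (P r)" "P r ! k r \<in> F" "\<And>i. i < k r \<Longrightarrow> P r ! i \<notin> F"
      using k[OF \<open>r \<in> I\<close>] by auto
    obtain y where y: "y \<in> F" "y \<notin> set (P r)" "E (P r ! (k r - 1)) y"
      using fort_exit[OF fort conjunct1[OF P[OF \<open>r < m\<close>]] kr] .
    obtain r' where "r' < m" "y \<in> set (P r')" using cover by blast
    with y have "r' \<in> I" "r' \<noteq> r" by (auto simp: I_def)
    moreover have "y \<noteq> P r' ! (k r' - 1)" using k[OF \<open>r' \<in> I\<close>] y(1) by auto
    ultimately show "\<exists>r'\<in>I. r' \<noteq> r \<and> (\<exists>y\<in>set (P r'). y \<noteq> P r' ! (k r' - 1) \<and> E (P r ! (k r - 1)) y)"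
      using \<open>y \<in> set (P r')\<close> y(3) by blast
  next
    fix r assume "r \<in> I"
    then have "k r - 1 < length (P r)" using k[of r] by auto
    then show "P r ! (k r - 1) \<in> set (P r)" by (rule nth_mem)
  qed (use P disjoint \<open>r0 \<in> I\<close> in \<open>auto simp: I_def\<close>)
qed

end

text \<open>A partially grown path decomposition: only the last vertex of a path may still have
  neighbours outside the covered set \<open>S\<close>.\<close>
definition rooted_path_system ::
    "('n \<Rightarrow> 'n \<Rightarrow> bool) \<Rightarrow> nat \<Rightarrow> (nat \<Rightarrow> 'n) \<Rightarrow> 'n set \<Rightarrow> (nat \<Rightarrow> 'n list) \<Rightarrow> bool" where
  "rooted_path_system E m v S P \<longleftrightarrow>
     (\<forall>r<m. is_gpath E (P r) \<and> hd (P r) = v r) \<and> (\<Union>r<m. set (P r)) = S \<and>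
     (\<forall>r<m. \<forall>r'<m. r \<noteq> r' \<longrightarrow> set (P r) \<inter> set (P r') = {}) \<and>
     (\<forall>r<m. \<forall>i u. Suc i < length (P r) \<and> E (P r ! i) u \<longrightarrow> u \<in> S)"

lemma rooted_path_system_extend:
  assumes P: "rooted_path_system E m v S P" and c: "c \<in> S" and w: "w \<notin> S" "E c w"
    and only_exit: "\<And>u. E c u \<Longrightarrow> u \<notin> S \<Longrightarrow> u = w"
  shows "\<exists>P'. rooted_path_system E m v (insert w S) P'"
proof -
  obtain r where r: "r < m" "c \<in> set (P r)" using P c unfolding rooted_path_system_def by blast
  then obtain i where i: "i < length (P r)" "c = P r ! i" by (auto simp: in_set_conv_nth)
  have gpath: "is_gpath E (P r)" and "hd (P r) = v r" using P r unfolding rooted_path_system_def by auto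
  have interior: "\<And>r j u. r < m \<Longrightarrow> Suc j < length (P r) \<Longrightarrow> E (P r ! j) u \<Longrightarrow> u \<in> S"
    using P unfolding rooted_path_system_def by blast
  have "\<not> Suc i < length (P r)" using interior[OF r(1)] i w by blast
  then have "i = length (P r) - 1" using i by simp
  then have last: "c = last (P r)" using i gpath by (simp add: is_gpath_def last_conv_nth)
  define P' where "P' = P(r := P r @ [w])"
  have "w \<notin> set (P r')" if "r' < m" for r'
    using P w that unfolding rooted_path_system_def by blast
  then have "\<forall>r'<m. is_gpath E (P' r') \<and> hd (P' r') = v r'"
    using P gpath last w \<open>hd (P r) = v r\<close>
    unfolding P'_def rooted_path_system_def is_gpath_iff by (auto simp: successively_append_iff)
  moreover have "(\<Union>r<m. set (P' r)) = insert w S"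
    using P r unfolding P'_def rooted_path_system_def by (auto split: if_splits)
  moreover have "\<forall>r1<m. \<forall>r2<m. r1 \<noteq> r2 \<longrightarrow> set (P' r1) \<inter> set (P' r2) = {}"
    using P w unfolding P'_def rooted_path_system_def by auto
  moreover have "u \<in> insert w S" if "r' < m" "Suc j < length (P' r')" "E (P' r' ! j) u" for r' j u
  proof (cases "r' = r \<and> \<not> Suc j < length (P r)")
    case True
    then have "j = length (P r) - 1" using True that(2) by (auto simp: P'_def)
    then have "P' r' ! j = c"
      using True last gpath unfolding P'_def by (auto simp: nth_append is_gpath_def last_conv_nth)
    then show ?thesis using only_exit[of u] that(3) by auto
  next
    case False
    then have "Suc j < length (P r') \<and> P' r' ! j = P r' ! j"
      using that(2) by (auto simp: P'_def nth_append)
    then show ?thesis using interior[OF that(1)] that(3) by auto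
  qed
  ultimately show ?thesis unfolding rooted_path_system_def by (intro exI[of _ P']) blast
qed

lemma exists_maximal_rooted_path_system:
  fixes E :: "'n::finite \<Rightarrow> 'n \<Rightarrow> bool"
  assumes "inj_on v {..<m}"
  obtains S P where "rooted_path_system E m v S P" "S = UNIV \<or> fort E (- S)"
proof -
  let ?covered = "\<lambda>S. \<exists>P. rooted_path_system E m v S P"
  have "?covered (v ` {..<m})"
    using assms by (intro exI[of _ "\<lambda>r. [v r]"])
      (auto simp: rooted_path_system_def is_gpath_def inj_on_def)
  moreover have "card S < Suc CARD('n)" for S :: "'n set"
    by (simp add: card_mono le_imp_less_Suc)
  ultimately obtain S where "?covered S" and maximal: "\<And>S'. ?covered S' \<Longrightarrow> card S' \<le> card S"
    using ex_has_greatest_nat[of ?covered _ card "Suc CARD('n)"] by blast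
  then obtain P where P: "rooted_path_system E m v S P" by blast
  have "\<exists>u\<in>- S. u \<noteq> w \<and> E c u" if "c \<notin> - S" "w \<in> - S" "E c w" for c w
  proof (rule ccontr)
    assume "\<not> ?thesis"
    then have "?covered (insert w S)"
      using rooted_path_system_extend[OF P] that by blast
    with maximal[of "insert w S"] that(2) show False by simp
  qed
  then have "S = UNIV \<or> fort E (- S)" unfolding fort_def by blast
  with P that show thesis by blast
qed

context forest
begin

lemma path_decomposition_if_forts_meet_inputs:
  assumes "inj_on v {..<m}" and forts: "\<And>F. fort E F \<Longrightarrow> \<exists>r<m. v r \<in> F"
  shows "\<exists>V. path_decomposition E m v V"
proof -
  obtain S P where P: "rooted_path_system E m v S P" and "S = UNIV \<or> fort E (- S)"
    using exists_maximal_rooted_path_system[OF assms(1)] by blast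
  have gpath: "is_gpath E (P r)" and hd: "hd (P r) = v r" if "r < m" for r
    using P that unfolding rooted_path_system_def by auto
  then have input: "v r \<in> set (P r)" if "r < m" for r
    using that by (metis hd_in_set is_gpath_def)
  then have "v r \<in> S" if "r < m" for r
    using P that unfolding rooted_path_system_def by blast
  then have "S = UNIV" using \<open>S = UNIV \<or> fort E (- S)\<close> forts by blast
  have "path_decomposition E m v (\<lambda>r. set (P r))"
    unfolding path_decomposition_def
  proof (intro conjI allI impI)
    show "(\<Union>r<m. set (P r)) = UNIV"
      using P \<open>S = UNIV\<close> unfolding rooted_path_system_def by blast
    show "set (P r) \<inter> set (P r') = {}" if "r < m" "r' < m" "r \<noteq> r'" for r r'
      using P that unfolding rooted_path_system_def by blast
    show "v r \<in> set (P r)" and "induced_path_from E (set (P r)) (v r)" if "r < m" for r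
      using input[OF that] induced_path_from_gpath[OF gpath[OF that]] hd[OF that]
      by simp_all
  qed
  then show ?thesis by blast
qed

lemma card_path_decomposition_edges:
  assumes decomposition: "path_decomposition E m v V" and "r < m" "r' < m" "r \<noteq> r'"
  shows "card {(x, y). x \<in> V r \<and> y \<in> V r' \<and> E x y} \<le> 1"
proof -
  obtain P where P: "\<And>r. r < m \<Longrightarrow> is_gpath E (P r) \<and> set (P r) = V r \<and> hd (P r) = v r"
    using path_decomposition_gpaths[OF decomposition] by blast
  have "set (P r) \<inter> set (P r') = {}"
    using decomposition P assms unfolding path_decomposition_def by simp
  then have "e1 = e2" if "e1 \<in> {(x, y). x \<in> V r \<and> y \<in> V r' \<and> E x y}"
    "e2 \<in> {(x, y). x \<in> V r \<and> y \<in> V r' \<and> E x y}" for e1 e2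
    using that P[OF \<open>r < m\<close>] P[OF \<open>r' < m\<close>] disjoint_gpaths_single_edge[of "P r" "P r'"] by auto
  then show ?thesis by (simp add: card_le_Suc0_iff_eq)
qed

end

theorem theorem2:
  fixes E :: "'n::finite \<Rightarrow> 'n \<Rightarrow> bool" and m :: nat and v :: "nat \<Rightarrow> 'n"
  assumes "is_tree E"
    and "m \<ge> 2"
    and "inj_on v {..<m}"
  shows "(SSC E m v \<longleftrightarrow> (\<exists>V. path_decomposition E m v V)) \<and>
         (\<forall>V. path_decomposition E m v V \<longrightarrow>
            (\<forall>r<m. \<forall>r'<m. r \<noteq> r' \<longrightarrow> card {(x, y). x \<in> V r \<and> y \<in> V r' \<and> E x y} \<le> 1))"
proof -
  interpret forest E using assms(1) by unfold_locales (simp_all add: is_tree_def)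
  have "SSC E m v \<longleftrightarrow> (\<forall>F. fort E F \<longrightarrow> (\<exists>r<m. v r \<in> F))"
    using SSC_if_forts_meet_inputs fort_meets_inputs_if_SSC by blast
  also have "\<dots> \<longleftrightarrow> (\<exists>V. path_decomposition E m v V)"
    using path_decomposition_if_forts_meet_inputs[OF assms(3)]
      fort_meets_inputs_if_path_decomposition by blast
  finally show ?thesis using card_path_decomposition_edges by blast
qed

end
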